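(* Consider the problem $$\text{(P)}\qquad \max_{\beta\in X}\ R(\beta)=\frac1n\sum_{i=1}^n r(w^i\cdot\beta;\,b_i^{(1)},b_i^{(2)})$$ and the problem $$\text{(G)}\qquad \max_{\beta,v,y}\ \frac1n\sum_{i=1}^n y_i\quad\text{s.t. } v_i=w^i\cdot\beta\ (i=1,\dots,n),\ \ (v_i,y_i)\in\operatorname{cl}\big(\mathrm{gr}(r(\cdot;b_i^{(1)},b_i^{(2)});[l_i,u_i])\big)\ (i=1,\dots,n),\ \ \beta\in X.$$ If $(\beta,v,y)$ is an optimal solution of (G), then $\beta$ is an optimal solution of (P). Conversely, if $\beta$ is an optimal solution of (P), then there exist $v\in\mathbb{R}^n$, $y\in\mathbb{R}^n$ such that $(\beta,v,y)$ is an optimal solution of (G).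
   Context: For bids $b^{(1)}\ge b^{(2)}\ge 0$ the reward function is $r(v;b^{(1)},b^{(2)})=b^{(2)}$ if $v\le b^{(2)}$, $=v$ if $b^{(2)}<v\le b^{(1)}$, and $=0$ if $v>b^{(1)}$. Data: $w^i\in\mathbb{R}^d$ and $b_i^{(1)}\ge b_i^{(2)}\ge0$ for $i=1,\dots,n$, and $X=[L,U]^d$. For a set $D\subseteq\mathbb{R}$, $\mathrm{gr}(r(\cdot;b^{(1)},b^{(2)});D)=\{(v,y): v\in D,\ y=r(v;b^{(1)},b^{(2)})\}$, and $\operatorname{cl}$ denotes topological closure in $\mathbb{R}^2$. The bounds are $l_i=\min_{\beta\in X}w^i\cdot\beta$ and $u_i=\max_{\beta\in X}w^i\cdot\beta$. *)

theory Defs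
  imports "HOL-Analysis.Analysis"
begin

definition reward :: "real \<Rightarrow> real \<Rightarrow> real \<Rightarrow> real" where
  "reward v b1 b2 = (if v \<le> b2 then b2 else if v \<le> b1 then v else 0)"

definition gr :: "(real \<Rightarrow> real) \<Rightarrow> real set \<Rightarrow> (real \<times> real) set" where
  "gr f D = {(v, y). v \<in> D \<and> y = f v}"

definition boxX :: "real \<Rightarrow> real \<Rightarrow> (real^'d) set" where
  "boxX L U = {\<beta>. \<forall>j. L \<le> \<beta> $ j \<and> \<beta> $ j \<le> U}"

text \<open>l_i = min (= inf, attained by compactness) over X of w.beta, u_i = max over X of w.beta.\<close>
definition lbnd :: "real \<Rightarrow> real \<Rightarrow> real^'d \<Rightarrow> real" where
  "lbnd L U w = Inf ((\<lambda>\<beta>. w \<bullet> \<beta>) ` boxX L U)"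

definition ubnd :: "real \<Rightarrow> real \<Rightarrow> real^'d \<Rightarrow> real" where
  "ubnd L U w = Sup ((\<lambda>\<beta>. w \<bullet> \<beta>) ` boxX L U)"

definition Robj :: "nat \<Rightarrow> (nat \<Rightarrow> real^'d) \<Rightarrow> (nat \<Rightarrow> real) \<Rightarrow> (nat \<Rightarrow> real) \<Rightarrow> real^'d \<Rightarrow> real" where
  "Robj n w b1 b2 \<beta> = (1 / real n) * (\<Sum>i<n. reward (w i \<bullet> \<beta>) (b1 i) (b2 i))"

definition optP :: "nat \<Rightarrow> (nat \<Rightarrow> real^'d) \<Rightarrow> (nat \<Rightarrow> real) \<Rightarrow> (nat \<Rightarrow> real) \<Rightarrow> real \<Rightarrow> real \<Rightarrow> real^'d \<Rightarrow> bool" where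
  "optP n w b1 b2 L U \<beta> \<longleftrightarrow> \<beta> \<in> boxX L U \<and>
     (\<forall>\<beta>'\<in>boxX L U. Robj n w b1 b2 \<beta>' \<le> Robj n w b1 b2 \<beta>)"

text \<open>Feasibility and optimality for (G); v, y are vectors indexed by i < n.\<close>
definition feasG :: "nat \<Rightarrow> (nat \<Rightarrow> real^'d) \<Rightarrow> (nat \<Rightarrow> real) \<Rightarrow> (nat \<Rightarrow> real) \<Rightarrow> real \<Rightarrow> real \<Rightarrow>
    real^'d \<Rightarrow> (nat \<Rightarrow> real) \<Rightarrow> (nat \<Rightarrow> real) \<Rightarrow> bool" where
  "feasG n w b1 b2 L U \<beta> v y \<longleftrightarrow> \<beta> \<in> boxX L U \<and>
     (\<forall>i<n. v i = w i \<bullet> \<beta> \<and>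
        (v i, y i) \<in> closure (gr (\<lambda>t. reward t (b1 i) (b2 i)) {lbnd L U (w i) .. ubnd L U (w i)}))"

definition Gobj :: "nat \<Rightarrow> (nat \<Rightarrow> real) \<Rightarrow> real" where
  "Gobj n y = (1 / real n) * (\<Sum>i<n. y i)"

definition optG :: "nat \<Rightarrow> (nat \<Rightarrow> real^'d) \<Rightarrow> (nat \<Rightarrow> real) \<Rightarrow> (nat \<Rightarrow> real) \<Rightarrow> real \<Rightarrow> real \<Rightarrow>
    real^'d \<Rightarrow> (nat \<Rightarrow> real) \<Rightarrow> (nat \<Rightarrow> real) \<Rightarrow> bool" where
  "optG n w b1 b2 L U \<beta> v y \<longleftrightarrow> feasG n w b1 b2 L U \<beta> v y \<and>
     (\<forall>\<beta>' v' y'. feasG n w b1 b2 L U \<beta>' v' y' \<longrightarrow> Gobj n y' \<le> Gobj n y)"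

end

theory Submission
  imports Defs
begin

text \<open>The reward function is upper semicontinuous, so the closure of its graph lies in its
  hypograph: a feasible point of (G) never earns more than the reward at \<open>\<beta>\<close>, while the graph
  point \<open>(w\<^sup>i \<cdot> \<beta>, r(w\<^sup>i \<cdot> \<beta>))\<close> is feasible and earns exactly \<open>R(\<beta>)\<close>.\<close>

lemma closed_hypograph_reward:
  assumes "b2 \<le> b1" "0 \<le> b2"
  shows "closed {(v, y). y \<le> reward v b1 b2}"
proof -
  have "{(v, y). y \<le> reward v b1 b2} =
        {p. (fst p \<le> b2 \<and> snd p \<le> b2) \<or> (b2 \<le> fst p \<and> fst p \<le> b1 \<and> snd p \<le> fst p)
            \<or> (b1 \<le> fst p \<and> snd p \<le> 0)}"
    using assms by (auto simp: reward_def split: if_splits)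
  moreover have "closed \<dots>"
    by (intro closed_Collect_disj closed_Collect_conj closed_Collect_le continuous_intros)
  ultimately show ?thesis by simp
qed

lemma closure_gr_reward_le:
  assumes "b2 \<le> b1" "0 \<le> b2" "(v, y) \<in> closure (gr (\<lambda>t. reward t b1 b2) D)"
  shows "y \<le> reward v b1 b2"
proof -
  have "gr (\<lambda>t. reward t b1 b2) D \<subseteq> {(v, y). y \<le> reward v b1 b2}"
    by (auto simp: gr_def)
  then have "closure (gr (\<lambda>t. reward t b1 b2) D) \<subseteq> {(v, y). y \<le> reward v b1 b2}"
    using closure_minimal closed_hypograph_reward[OF assms(1,2)] by blast
  with assms(3) show ?thesis by blast
qed

lemma compact_boxX: "compact (boxX L U :: (real^'d) set)"
proof -
  have "boxX L U = cbox ((\<chi> j. L) :: real^'d) (\<chi> j. U)"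
    unfolding boxX_def by (auto simp: mem_box_cart)
  then show ?thesis by simp
qed

lemma inner_mem_lbnd_ubnd:
  fixes w \<beta> :: "real^'d"
  assumes "\<beta> \<in> boxX L U"
  shows "w \<bullet> \<beta> \<in> {lbnd L U w .. ubnd L U w}"
proof -
  have "bounded ((\<lambda>\<beta>. w \<bullet> \<beta>) ` boxX L U)"
    by (intro compact_imp_bounded compact_continuous_image compact_boxX continuous_intros)
  moreover have "w \<bullet> \<beta> \<in> (\<lambda>\<beta>. w \<bullet> \<beta>) ` boxX L U"
    using assms by blast
  ultimately show ?thesis
    unfolding lbnd_def ubnd_def
    by (simp add: cInf_lower cSup_upper bounded_imp_bdd_below bounded_imp_bdd_above)
qed

lemma Gobj_le_Robj_if_feasG:
  assumes "\<And>i. i < n \<Longrightarrow> b1 i \<ge> b2 i \<and> b2 i \<ge> 0"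
    and "feasG n w b1 b2 L U \<beta> v y"
  shows "Gobj n y \<le> Robj n w b1 b2 \<beta>"
proof -
  have "y i \<le> reward (w i \<bullet> \<beta>) (b1 i) (b2 i)" if "i < n" for i
    using assms that closure_gr_reward_le unfolding feasG_def by metis
  then have "(\<Sum>i<n. y i) \<le> (\<Sum>i<n. reward (w i \<bullet> \<beta>) (b1 i) (b2 i))"
    by (intro sum_mono) auto
  then show ?thesis
    unfolding Gobj_def Robj_def by (intro mult_left_mono) auto
qed

lemma feasG_graph_point:
  assumes "\<beta> \<in> boxX L U"
  shows "feasG n w b1 b2 L U \<beta> (\<lambda>i. w i \<bullet> \<beta>) (\<lambda>i. reward (w i \<bullet> \<beta>) (b1 i) (b2 i))"
proof -
  have "(w i \<bullet> \<beta>, reward (w i \<bullet> \<beta>) (b1 i) (b2 i))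
          \<in> gr (\<lambda>t. reward t (b1 i) (b2 i)) {lbnd L U (w i) .. ubnd L U (w i)}" for i
    using inner_mem_lbnd_ubnd[OF assms] by (simp add: gr_def)
  then show ?thesis
    using assms closure_subset unfolding feasG_def by blast
qed

lemma Gobj_graph_point:
  "Gobj n (\<lambda>i. reward (w i \<bullet> \<beta>) (b1 i) (b2 i)) = Robj n w b1 b2 \<beta>"
  by (simp add: Gobj_def Robj_def)

lemma optG_imp_optP:
  assumes "\<And>i. i < n \<Longrightarrow> b1 i \<ge> b2 i \<and> b2 i \<ge> 0"
    and "optG n w b1 b2 L U \<beta> v y"
  shows "optP n w b1 b2 L U \<beta>"
proof -
  have feas: "feasG n w b1 b2 L U \<beta> v y"
    using assms(2) by (simp add: optG_def)
  have "Robj n w b1 b2 \<beta>' \<le> Robj n w b1 b2 \<beta>" if "\<beta>' \<in> boxX L U" for \<beta>'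
  proof -
    have "Robj n w b1 b2 \<beta>' = Gobj n (\<lambda>i. reward (w i \<bullet> \<beta>') (b1 i) (b2 i))"
      by (rule Gobj_graph_point[symmetric])
    also have "\<dots> \<le> Gobj n y"
      using assms(2) feasG_graph_point[OF that] unfolding optG_def by blast
    also have "\<dots> \<le> Robj n w b1 b2 \<beta>"
      using Gobj_le_Robj_if_feasG[OF assms(1) feas] .
    finally show ?thesis .
  qed
  moreover have "\<beta> \<in> boxX L U"
    using feas by (simp add: feasG_def)
  ultimately show ?thesis
    by (simp add: optP_def)
qed

lemma optP_imp_optG_graph_point:
  assumes "\<And>i. i < n \<Longrightarrow> b1 i \<ge> b2 i \<and> b2 i \<ge> 0"
    and "optP n w b1 b2 L U \<beta>"
  shows "optG n w b1 b2 L U \<beta> (\<lambda>i. w i \<bullet> \<beta>) (\<lambda>i. reward (w i \<bullet> \<beta>) (b1 i) (b2 i))"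
proof -
  have box: "\<beta> \<in> boxX L U"
    using assms(2) by (simp add: optP_def)
  have "Gobj n y' \<le> Robj n w b1 b2 \<beta>" if "feasG n w b1 b2 L U \<beta>' v' y'" for \<beta>' v' y'
  proof -
    have "Gobj n y' \<le> Robj n w b1 b2 \<beta>'"
      using Gobj_le_Robj_if_feasG[OF assms(1) that] .
    also have "\<dots> \<le> Robj n w b1 b2 \<beta>"
      using assms(2) that unfolding optP_def feasG_def by blast
    finally show ?thesis .
  qed
  then show ?thesis
    unfolding optG_def Gobj_graph_point using feasG_graph_point[OF box] by blast
qed

theorem proposition1:
  fixes n :: nat and w :: "nat \<Rightarrow> real^'d" and b1 b2 :: "nat \<Rightarrow> real" and L U :: real
  assumes "n \<ge> 1"
    and "\<And>i. i < n \<Longrightarrow> b1 i \<ge> b2 i \<and> b2 i \<ge> 0"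
  shows "(\<forall>\<beta> v y. optG n w b1 b2 L U \<beta> v y \<longrightarrow> optP n w b1 b2 L U \<beta>) \<and>
         (\<forall>\<beta>. optP n w b1 b2 L U \<beta> \<longrightarrow> (\<exists>v y. optG n w b1 b2 L U \<beta> v y))"
  using optG_imp_optP[of n b2 b1] optP_imp_optG_graph_point[of n b2 b1] assms(2) by blast

end
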